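(* Fix a positive integer $k$. Then the sequence $(\Gamma(n^k,(n+1)^k))_{n\ge 1}$ is eventually $1,2,1,2,\ldots$ (alternating between $1$ and $2$). More precisely, let $g(x)$ be the remainder of the polynomial $\left(\sum_{i=1}^k x^{i-1}\right)^k$ upon division by $x^k$ (i.e., the sum of its terms of degree less than $k$). When $k$ is odd, let $M_k$ be the smallest positive integer such that $0<n^k-g(n)<n^k$ and $0<g(-n)<n^k$ for all integers $n\ge M_k$; when $k$ is even, let $M_k$ be the smallest positive integer such that $0<n^k+g(-n)<n^k$ and $0<g(n)<n^k$ for all integers $n\ge M_k$. Then the sequence $(\Gamma(n^k,(n+1)^k))_{n\ge 1}$ alternates between $1$ and $2$ from some index $n\le M_k+1$ onward.
   Context: For relatively prime positive integers $p,q$, exactly one of the equations $px+qy=\frac{(p-1)(q-1)}{2}$ (Equation 1) and $px+qy+1=\frac{(p-1)(q-1)}{2}$ (Equation 2) has a solution in nonnegative integers $(x,y)$. For positive integers $a,b$ with $d=\gcd(a,b)$, $\Gamma(a,b)=1$ if Equation 1 with $(p,q)=(a/d,b/d)$ has a nonnegative integer solution, and $\Gamma(a,b)=2$ otherwise. *)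

theory Defs
  imports Main "HOL-Computational_Algebra.Polynomial"
begin

definition Gamma :: "nat \<Rightarrow> nat \<Rightarrow> nat" where
  "Gamma a b = (let d = gcd a b; p = a div d; q = b div d in
     if (\<exists>x y :: nat. p * x + q * y = (p - 1) * (q - 1) div 2) then 1 else 2)"

definition gpoly :: "nat \<Rightarrow> int poly" where
  "gpoly k = (\<Sum>i<k. monom 1 i) ^ k"

definition g :: "nat \<Rightarrow> int \<Rightarrow> int" where
  "g k x = (\<Sum>i<k. coeff (gpoly k) i * x ^ i)"

definition Mcond :: "nat \<Rightarrow> nat \<Rightarrow> bool" where
  "Mcond k M = (0 < M \<and> (\<forall>n::int. n \<ge> int M \<longrightarrow>
     (if odd k then 0 < n ^ k - g k n \<and> n ^ k - g k n < n ^ k \<and> 0 < g k (-n) \<and> g k (-n) < n ^ k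
      else 0 < n ^ k + g k (-n) \<and> n ^ k + g k (-n) < n ^ k \<and> 0 < g k n \<and> g k n < n ^ k)))"

definition Mk :: "nat \<Rightarrow> nat" where
  "Mk k = (LEAST M. Mcond k M)"

end

(*
  Let p = n^k and q = (n+1)^k, and let a, b be the inverses of q modulo p and of p
  modulo q, taken in (0, p) and (0, q). Then a q + b p = p q + 1, so twice the genus
  (p-1)(q-1)/2 equals (a-1) q + (b-1) p; by uniqueness of such decompositions the genus
  is a nonnegative combination of p and q iff a and b are both odd. The inverse modulo
  the even one of p, q is automatically odd, so Gamma is decided by the inverse modulo
  the odd one.

  Because g(x) (1-x)^k = 1 mod x^k, the inverses are g(-n) mod n^k and (-1)^k g(n+1)
  mod (n+1)^k. For n >= M_k the inequalities defining M_k identify the representatives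
  in range exactly (add n^k resp. (n+1)^k or not, according to the parity of k), so
  their parity is that of g(1) shifted by the parity of k, and Gamma alternates with
  the parity of n.
*)

theory Submission
  imports Defs "HOL-Number_Theory.Cong"
begin

definition representable :: "nat \<Rightarrow> nat \<Rightarrow> nat \<Rightarrow> bool" where
  "representable p q m \<longleftrightarrow> (\<exists>x y. p * x + q * y = m)"

lemma representable_commute: "representable p q m \<longleftrightarrow> representable q p m"
  unfolding representable_def by (metis add.commute)

lemma Gamma_eq_representable:
  "Gamma a b = (let d = gcd a b; p = a div d; q = b div d in
     if representable p q ((p - 1) * (q - 1) div 2) then 1 else 2)"
  by (simp add: Gamma_def representable_def)

lemma Gamma_coprime:
  assumes "coprime p q"
  shows "Gamma p q = (if representable p q ((p - 1) * (q - 1) div 2) then 1 else 2)"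
  using assms by (simp add: Gamma_eq_representable)

lemma Gamma_commute: "Gamma p q = Gamma q p"
  unfolding Gamma_eq_representable Let_def
  by (simp add: gcd.commute mult.commute representable_commute[of "p div _"])

lemma coprime_lincomb_unique:
  fixes p q x y x' y' :: int
  assumes "coprime p q" and eq: "p * x + q * y = p * x' + q * y'"
    and "0 \<le> y" "y < p" "0 \<le> y'" "y' < p"
  shows "y = y'"
proof -
  have "q * y - q * y' = p * (x' - x)"
    using eq by (simp add: algebra_simps)
  then have "[q * y = q * y'] (mod p)"
    by (simp add: cong_iff_dvd_diff)
  then have "[y = y'] (mod p)"
    using assms(1) by (simp add: cong_mult_lcancel coprime_commute)
  then show ?thesis
    using assms(3-6) by (rule cong_less_imp_eq_int[rotated 4])
qed

lemma mod_inverses_sum_eq: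
  fixes p q a b :: int
  assumes "coprime p q" "0 < a" "a < p" "0 < b" "b < q"
    and "[a * q = 1] (mod p)" "[b * p = 1] (mod q)"
  shows "a * q + b * p = p * q + 1"
proof -
  have "[a * q + b * p = 1] (mod p)"
    using cong_add[OF assms(6), of "b * p" 0] by (simp add: cong_0_iff)
  moreover have "[a * q + b * p = 1] (mod q)"
    using cong_add[OF assms(7), of "a * q" 0] by (simp add: cong_0_iff add.commute)
  ultimately have "[a * q + b * p = 1] (mod p * q)"
    using assms(1) by (simp add: coprime_cong_mult)
  then obtain t where t: "a * q + b * p - 1 = p * q * t"
    by (auto simp: cong_iff_dvd_diff elim: dvdE)
  have pq: "0 < p * q"
    using assms(2-5) by simp
  have "a * q \<le> (p - 1) * q" "b * p \<le> (q - 1) * p"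
    using assms(2-5) by (auto intro: mult_right_mono)
  then have "a * q + b * p - 1 < p * q * 2"
    using assms(2-5) by (simp add: left_diff_distrib mult.commute[of q p])
  then have "t < 2"
    using t pq by (simp add: mult_less_cancel_left_pos)
  moreover have "0 < a * q" "0 < b * p"
    using assms(2-5) by simp_all
  then have "0 < p * q * t"
    using t by linarith
  then have "0 < t"
    using pq by (rule zero_less_mult_pos)
  ultimately have "t = 1"
    by simp
  then show ?thesis
    using t by simp
qed

lemma obtain_inverse_mod_pos:
  fixes p q :: int
  assumes "coprime p q" "1 < q"
  obtains b where "0 < b" "b < q" "[b * p = 1] (mod q)"
proof -
  obtain x where x: "[p * x = 1] (mod q)"
    using assms(1) cong_solve_coprime_int[of p q] by blast
  have inv: "[x mod q * p = 1] (mod q)"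
    using x by (metis cong_def mod_mult_left_eq mult.commute)
  have "x mod q \<noteq> 0"
  proof
    assume "x mod q = 0"
    then have "[0 = 1] (mod q)"
      using inv by simp
    then show False
      using assms(2) by (simp add: cong_iff_dvd_diff)
  qed
  moreover have "0 \<le> x mod q" "x mod q < q"
    using assms(2) by simp_all
  ultimately show ?thesis
    using inv by (intro that) auto
qed

lemma double_genus_eq:
  fixes p q :: nat
  assumes "coprime p q" "0 < p" "0 < q"
  shows "2 * int ((p - 1) * (q - 1) div 2) = (int p - 1) * (int q - 1)"
proof -
  have "even ((p - 1) * (q - 1))"
    using assms(1) coprime_common_divisor_nat[of p q 2] by (auto simp: even_mult_iff)
  then have "2 * ((p - 1) * (q - 1) div 2) = (p - 1) * (q - 1)"
    by simp
  then have "2 * int ((p - 1) * (q - 1) div 2) = int ((p - 1) * (q - 1))"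
    using arg_cong[of _ _ int] by fastforce
  also have "\<dots> = (int p - 1) * (int q - 1)"
    using assms(2,3) by (simp add: of_nat_diff)
  finally show ?thesis .
qed

lemma genus_representation_halves:
  fixes p q x y :: nat and a b :: int
  assumes cop: "coprime p q" and a: "0 < a" "a < int p" and b: "0 < b" "b < int q"
    and sum_eq: "a * int q + b * int p = int p * int q + 1"
    and xy: "p * x + q * y = (p - 1) * (q - 1) div 2"
  shows "a = 2 * int y + 1" and "b = 2 * int x + 1"
proof -
  define C where "C = (p - 1) * (q - 1) div 2"
  have C: "2 * int C = (int p - 1) * (int q - 1)"
    unfolding C_def using double_genus_eq[OF cop] a b by simp
  have xy_int: "int p * int x + int q * int y = int C"
    using xy unfolding C_def[symmetric] by (simp flip: of_nat_mult of_nat_add)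
  have "q * y \<le> C"
    using xy unfolding C_def[symmetric] by linarith
  then have "int q * (2 * int y) \<le> 2 * int C"
    by (simp add: mult.left_commute flip: of_nat_mult)
  also have "\<dots> < int q * int p"
    using C a b by (simp add: algebra_simps)
  finally have y: "2 * int y < int p"
    by (simp add: mult_less_cancel_left)
  have decomp: "int p * (2 * int x) + int q * (2 * int y) = int p * (b - 1) + int q * (a - 1)"
    using C sum_eq xy_int by (simp add: algebra_simps)
  have "coprime (int p) (int q)"
    using cop by simp
  then have "2 * int y = a - 1"
    using decomp by (rule coprime_lincomb_unique) (use y a in auto)
  moreover from this have "int p * (2 * int x) = int p * (b - 1)"
    using decomp by simp
  then have "2 * int x = b - 1"
    using a by simp
  ultimately show "a = 2 * int y + 1" "b = 2 * int x + 1"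
    by simp_all
qed

lemma representable_genus_iff_odd:
  fixes p q :: nat and a b :: int
  assumes cop: "coprime p q" and a: "0 < a" "a < int p" and b: "0 < b" "b < int q"
    and sum_eq: "a * int q + b * int p = int p * int q + 1"
  shows "representable p q ((p - 1) * (q - 1) div 2) \<longleftrightarrow> odd a \<and> odd b"
proof
  assume "representable p q ((p - 1) * (q - 1) div 2)"
  then obtain x y where "p * x + q * y = (p - 1) * (q - 1) div 2"
    unfolding representable_def by blast
  then show "odd a \<and> odd b"
    using genus_representation_halves[OF assms] by simp
next
  assume "odd a \<and> odd b"
  then obtain x y where x: "b = 2 * x + 1" and y: "a = 2 * y + 1"
    by (meson oddE)
  have "x \<ge> 0" "y \<ge> 0"
    using x y a b by auto
  have "2 * int ((p - 1) * (q - 1) div 2) = (int p - 1) * (int q - 1)"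
    using double_genus_eq[OF cop] a b by simp
  also have "\<dots> = 2 * int (p * nat x + q * nat y)"
    using sum_eq x y \<open>x \<ge> 0\<close> \<open>y \<ge> 0\<close> by (simp add: algebra_simps)
  finally show "representable p q ((p - 1) * (q - 1) div 2)"
    unfolding representable_def by (metis mult_cancel_left of_nat_eq_iff zero_neq_numeral)
qed

lemma Gamma_odd_even:
  fixes p q :: nat and a :: int
  assumes cop: "coprime p q" and "odd p" "even q"
    and a: "0 < a" "a < int p" and inv: "[a * int q = 1] (mod int p)"
  shows "Gamma p q = (if odd a then 1 else 2)"
proof -
  have "q \<noteq> 0"
  proof
    assume "q = 0"
    then have "p = 1"
      using cop by simp
    then show False
      using a by simp
  qed
  with \<open>even q\<close> have "1 < int q"
    by (auto elim: evenE)
  moreover have cop_int: "coprime (int p) (int q)"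
    using cop by simp
  ultimately obtain b where b: "0 < b" "b < int q" "[b * int p = 1] (mod int q)"
    using obtain_inverse_mod_pos[of "int p" "int q"] by blast
  have sum_eq: "a * int q + b * int p = int p * int q + 1"
    by (rule mod_inverses_sum_eq[OF cop_int a b(1,2) inv b(3)])
  then have "odd (a * int q + b * int p)"
    using \<open>even q\<close> by simp
  then have "odd b"
    using \<open>even q\<close> by simp
  then show ?thesis
    using Gamma_coprime[OF cop] representable_genus_iff_odd[OF cop a b(1,2) sum_eq] by simp
qed

lemma poly_minus_truncation_dvd:
  fixes P :: "'a::comm_ring_1 poly"
  shows "x ^ k dvd poly P x - (\<Sum>i<k. coeff P i * x ^ i)"
proof -
  define D where "D = Suc (degree P) + k"
  have "poly P x = (\<Sum>i<D. coeff P i * x ^ i)"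
    unfolding poly_altdef D_def
    by (rule sum.mono_neutral_left) (auto simp: coeff_eq_0)
  also have "\<dots> = (\<Sum>i<k. coeff P i * x ^ i) + (\<Sum>i=k..<D. coeff P i * x ^ i)"
    unfolding D_def lessThan_atLeast0 by (subst sum.atLeastLessThan_concat) auto
  finally have "poly P x - (\<Sum>i<k. coeff P i * x ^ i) = (\<Sum>i=k..<D. coeff P i * x ^ i)"
    by simp
  also have "x ^ k dvd \<dots>"
    by (intro dvd_sum dvd_mult le_imp_power_dvd) auto
  finally show ?thesis .
qed

lemma poly_gpoly: "poly (gpoly k) x = (\<Sum>i<k. x ^ i) ^ k"
  unfolding gpoly_def by (simp add: poly_sum poly_monom)

lemma g_mult_one_minus_power_cong: "[g k x * (1 - x) ^ k = 1] (mod x ^ k)"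
proof -
  have "[g k x = poly (gpoly k) x] (mod x ^ k)"
    using poly_minus_truncation_dvd[of x k "gpoly k"]
    by (simp add: g_def cong_iff_dvd_diff dvd_diff_commute)
  then have "[g k x * (1 - x) ^ k = poly (gpoly k) x * (1 - x) ^ k] (mod x ^ k)"
    by (rule cong_scalar_right)
  also have "poly (gpoly k) x * (1 - x) ^ k = (1 - x ^ k) ^ k"
    by (simp add: poly_gpoly one_diff_power_eq power_mult_distrib[symmetric] mult.commute)
  also have "[(1 - x ^ k) ^ k = 1 ^ k] (mod x ^ k)"
    by (intro cong_pow) (simp add: cong_iff_dvd_diff)
  finally show ?thesis
    by simp
qed

lemma g_minus_mult_one_plus_power_cong: "[g k (- x) * (1 + x) ^ k = 1] (mod x ^ k)"
proof -
  have "[g k (- x) * (1 - - x) ^ k = 1] (mod (- x) ^ k)"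
    by (rule g_mult_one_minus_power_cong)
  then show ?thesis
    by (cases "even k") simp_all
qed

lemma g_succ_mult_power_cong: "[(- 1) ^ k * g k (x + 1) * x ^ k = 1] (mod (x + 1) ^ k)"
proof -
  have "(1 - (x + 1)) ^ k = (- 1) ^ k * x ^ k"
    unfolding power_minus[symmetric] by simp
  then have eq: "(- 1) ^ k * g k (x + 1) * x ^ k = g k (x + 1) * (1 - (x + 1)) ^ k"
    by (simp only: ac_simps)
  show ?thesis
    unfolding eq by (rule g_mult_one_minus_power_cong)
qed

lemma g_cong: "[x = y] (mod m) \<Longrightarrow> [g k x = g k y] (mod m)"
  unfolding g_def by (intro cong_sum cong_mult cong_refl cong_pow)

lemma odd_g_iff:
  fixes x :: int
  assumes "odd x"
  shows "odd (g k x) \<longleftrightarrow> odd (g k 1)"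
proof -
  have "[x = 1] (mod 2)"
    using assms by (simp add: cong_def odd_iff_mod_2_eq_one)
  then have "[g k x = g k 1] (mod 2)"
    by (rule g_cong)
  then show ?thesis
    by (simp add: cong_def odd_iff_mod_2_eq_one)
qed

lemma coeff_mult_nonneg:
  fixes P Q :: "'a::linordered_semidom poly"
  assumes "\<And>i. 0 \<le> coeff P i" "\<And>i. 0 \<le> coeff Q i"
  shows "0 \<le> coeff (P * Q) n"
  unfolding coeff_mult using assms by (intro sum_nonneg mult_nonneg_nonneg)

lemma coeff_power_nonneg:
  fixes P :: "'a::linordered_semidom poly"
  assumes "\<And>i. 0 \<le> coeff P i"
  shows "0 \<le> coeff (P ^ m) n"
proof (induction m arbitrary: n)
  case 0
  then show ?case by (simp add: coeff_1)
next
  case (Suc m)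
  then show ?case using assms by (simp add: coeff_mult_nonneg)
qed

lemma coeff_geometric_poly: "coeff (\<Sum>i<k. monom 1 i) n = (if n < k then 1 else 0)"
  by (simp add: coeff_sum coeff_monom)

lemma coeff_gpoly_nonneg: "0 \<le> coeff (gpoly k) i"
  unfolding gpoly_def by (rule coeff_power_nonneg) (simp add: coeff_geometric_poly)

lemma one_le_coeff_gpoly_pred:
  assumes "k = Suc j"
  shows "1 \<le> coeff (gpoly k) j"
proof -
  define S :: "int poly" where "S = (\<Sum>i<k. monom 1 i)"
  have S: "\<And>i. 0 \<le> coeff S i"
    unfolding S_def by (simp add: coeff_geometric_poly)
  have "gpoly k = S * S ^ j"
    unfolding gpoly_def S_def assms by simp
  then have "coeff (gpoly k) j = (\<Sum>i\<le>j. coeff S i * coeff (S ^ j) (j - i))"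
    by (simp add: coeff_mult)
  also have "\<dots> \<ge> coeff S j * coeff (S ^ j) (j - j)"
    by (rule member_le_sum) (auto intro!: mult_nonneg_nonneg S coeff_power_nonneg)
  also have "coeff S j * coeff (S ^ j) (j - j) = 1"
    unfolding S_def by (simp add: coeff_geometric_poly coeff_0_power assms)
  finally show ?thesis
    by simp
qed

lemma abs_sum_nonneg_coeffs_less_power:
  fixes c :: "nat \<Rightarrow> int"
  assumes c: "\<And>i. 0 \<le> c i" and x: "(\<Sum>i<m. c i) < \<bar>x\<bar>"
  shows "\<bar>\<Sum>i<m. c i * x ^ i\<bar> < \<bar>x\<bar> ^ m"
proof (cases m)
  case 0
  then show ?thesis by simp
next
  case (Suc j)
  have "0 \<le> (\<Sum>i<m. c i)"
    using c by (simp add: sum_nonneg)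
  then have "1 \<le> \<bar>x\<bar>"
    using x by linarith
  have "\<bar>\<Sum>i<m. c i * x ^ i\<bar> \<le> (\<Sum>i<m. c i * \<bar>x\<bar> ^ i)"
    using c sum_abs[of "\<lambda>i. c i * x ^ i" "{..<m}"] by (simp add: abs_mult power_abs)
  also have "\<dots> \<le> (\<Sum>i<m. c i * \<bar>x\<bar> ^ j)"
    using \<open>1 \<le> \<bar>x\<bar>\<close> Suc by (intro sum_mono mult_left_mono power_increasing c) auto
  also have "\<dots> = (\<Sum>i<m. c i) * \<bar>x\<bar> ^ j"
    by (simp add: sum_distrib_right)
  also have "\<dots> < \<bar>x\<bar> * \<bar>x\<bar> ^ j"
    using x \<open>1 \<le> \<bar>x\<bar>\<close> by (intro mult_strict_right_mono) auto
  finally show ?thesis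
    using Suc by simp
qed

lemma abs_g_less_power:
  assumes "(\<Sum>i<k. coeff (gpoly k) i) < \<bar>x\<bar>"
  shows "\<bar>g k x\<bar> < \<bar>x\<bar> ^ k"
  unfolding g_def by (rule abs_sum_nonneg_coeffs_less_power[OF coeff_gpoly_nonneg assms])

lemma sgn_add_abs_less:
  fixes r y :: "'a::linordered_idom"
  assumes "\<bar>r\<bar> < \<bar>y\<bar>"
  shows "sgn (r + y) = sgn y"
  using assms by (auto simp: sgn_if abs_if split: if_splits)

lemma sgn_g_eq_sgn_power:
  assumes k: "k = Suc j" and x: "(\<Sum>i<k. coeff (gpoly k) i) < \<bar>x\<bar>"
  shows "sgn (g k x) = sgn (x ^ j)"
proof -
  let ?c = "coeff (gpoly k)"
  have "(\<Sum>i<j. ?c i) \<le> (\<Sum>i<k. ?c i)"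
    using k by (intro sum_mono2 coeff_gpoly_nonneg) auto
  then have "(\<Sum>i<j. ?c i) < \<bar>x\<bar>"
    using x by linarith
  then have "\<bar>\<Sum>i<j. ?c i * x ^ i\<bar> < \<bar>x\<bar> ^ j"
    by (rule abs_sum_nonneg_coeffs_less_power[OF coeff_gpoly_nonneg])
  also have "\<dots> = \<bar>x ^ j\<bar>"
    by (simp add: power_abs)
  also have "\<dots> \<le> \<bar>?c j * x ^ j\<bar>"
    using one_le_coeff_gpoly_pred[OF k] by (simp add: abs_mult mult_le_cancel_right1)
  finally have "sgn ((\<Sum>i<j. ?c i * x ^ i) + ?c j * x ^ j) = sgn (?c j * x ^ j)"
    by (rule sgn_add_abs_less)
  also have "\<dots> = sgn (x ^ j)"
    using one_le_coeff_gpoly_pred[OF k] by (simp add: sgn_mult)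
  finally show ?thesis
    unfolding g_def k by simp
qed

lemma Mcond_exists:
  assumes "0 < k"
  shows "Mcond k (nat (\<Sum>i<k. coeff (gpoly k) i) + 1)"
  unfolding Mcond_def
proof (intro conjI allI impI)
  fix n :: int
  let ?T = "\<Sum>i<k. coeff (gpoly k) i"
  obtain j where k: "k = Suc j"
    using assms by (cases k) auto
  assume "int (nat ?T + 1) \<le> n"
  moreover have "0 \<le> ?T"
    by (intro sum_nonneg coeff_gpoly_nonneg)
  ultimately have T: "?T < \<bar>n\<bar>" "?T < \<bar>- n\<bar>" and "0 < n"
    by auto
  have "\<bar>g k n\<bar> < n ^ k" "\<bar>g k (- n)\<bar> < n ^ k"
    using abs_g_less_power[OF T(1)] abs_g_less_power[OF T(2)] \<open>0 < n\<close> by simp_all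
  moreover have "0 < g k n"
    using sgn_g_eq_sgn_power[OF k T(1)] \<open>0 < n\<close> by (simp add: sgn_1_pos)
  moreover have "if odd k then 0 < g k (- n) else g k (- n) < 0"
    using sgn_g_eq_sgn_power[OF k T(2)] \<open>0 < n\<close> k
    by (cases "even j") (auto simp: sgn_1_pos sgn_1_neg)
  ultimately show "if odd k
      then 0 < n ^ k - g k n \<and> n ^ k - g k n < n ^ k \<and> 0 < g k (- n) \<and> g k (- n) < n ^ k
      else 0 < n ^ k + g k (- n) \<and> n ^ k + g k (- n) < n ^ k \<and> 0 < g k n \<and> g k n < n ^ k"
    by (auto simp: abs_less_iff)
qed simp

lemma Mcond_bounds:
  assumes "Mcond k M" "int M \<le> x"
  shows "0 < g k (- x) + (if even k then x ^ k else 0)"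
    and "g k (- x) + (if even k then x ^ k else 0) < x ^ k"
    and "0 < (- 1) ^ k * g k x + (if odd k then x ^ k else 0)"
    and "(- 1) ^ k * g k x + (if odd k then x ^ k else 0) < x ^ k"
proof -
  from assms have "if odd k
      then 0 < x ^ k - g k x \<and> x ^ k - g k x < x ^ k \<and> 0 < g k (- x) \<and> g k (- x) < x ^ k
      else 0 < x ^ k + g k (- x) \<and> x ^ k + g k (- x) < x ^ k \<and> 0 < g k x \<and> g k x < x ^ k"
    unfolding Mcond_def by blast
  then show "0 < g k (- x) + (if even k then x ^ k else 0)"
    and "g k (- x) + (if even k then x ^ k else 0) < x ^ k"
    and "0 < (- 1) ^ k * g k x + (if odd k then x ^ k else 0)"
    and "(- 1) ^ k * g k x + (if odd k then x ^ k else 0) < x ^ k"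
    by (cases "odd k"; simp add: algebra_simps)+
qed

lemma Gamma_consecutive_powers_odd:
  fixes n :: nat
  assumes k: "0 < k" and M: "Mcond k M" "M \<le> n" and n: "odd n"
  shows "Gamma (n ^ k) ((n + 1) ^ k) = (if odd k \<longleftrightarrow> odd (g k 1) then 1 else 2)"
proof -
  define a where "a = g k (- n) + (if even k then int n ^ k else 0)"
  have "0 < a" "a < int (n ^ k)"
    using Mcond_bounds(1,2)[OF M(1), of n] M(2) unfolding a_def by simp_all
  moreover have "[a * int ((n + 1) ^ k) = 1] (mod int (n ^ k))"
  proof -
    have "[a = g k (- n)] (mod int n ^ k)"
      unfolding a_def by (simp add: cong_iff_dvd_diff)
    then have "[a * (1 + int n) ^ k = g k (- n) * (1 + int n) ^ k] (mod int n ^ k)"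
      by (rule cong_scalar_right)
    also have "[g k (- n) * (1 + int n) ^ k = 1] (mod int n ^ k)"
      by (rule g_minus_mult_one_plus_power_cong)
    finally show ?thesis
      by (simp add: add.commute)
  qed
  moreover have "odd a \<longleftrightarrow> (odd k \<longleftrightarrow> odd (g k 1))"
  proof -
    have "odd (g k (- int n)) \<longleftrightarrow> odd (g k 1)"
      using n by (intro odd_g_iff) simp
    then show ?thesis
      unfolding a_def using n k by (cases "even k") simp_all
  qed
  moreover have "coprime (n ^ k) ((n + 1) ^ k)" "odd (n ^ k)" "even ((n + 1) ^ k)"
    using n k by simp_all
  ultimately show ?thesis
    using Gamma_odd_even by simp
qed

lemma Gamma_consecutive_powers_even:
  fixes n :: nat
  assumes k: "0 < k" and M: "Mcond k M" "M \<le> n" and n: "even n"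
  shows "Gamma (n ^ k) ((n + 1) ^ k) = (if odd k \<longleftrightarrow> odd (g k 1) then 2 else 1)"
proof -
  define b where "b = (- 1) ^ k * g k (int n + 1) + (if odd k then (int n + 1) ^ k else 0)"
  have "0 < b" "b < int ((n + 1) ^ k)"
    using Mcond_bounds(3,4)[OF M(1), of "int n + 1"] M(2) unfolding b_def
    by (simp_all add: add.commute)
  moreover have "[b * int (n ^ k) = 1] (mod int ((n + 1) ^ k))"
  proof -
    have "[b = (- 1) ^ k * g k (int n + 1)] (mod (int n + 1) ^ k)"
      unfolding b_def by (simp add: cong_iff_dvd_diff)
    then have "[b * int n ^ k = (- 1) ^ k * g k (int n + 1) * int n ^ k] (mod (int n + 1) ^ k)"
      by (rule cong_scalar_right)
    also have "[(- 1) ^ k * g k (int n + 1) * int n ^ k = 1] (mod (int n + 1) ^ k)"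
      by (rule g_succ_mult_power_cong)
    finally show ?thesis
      by (simp add: add.commute)
  qed
  moreover have "odd b \<longleftrightarrow> \<not> (odd k \<longleftrightarrow> odd (g k 1))"
  proof -
    have "odd (g k (int n + 1)) \<longleftrightarrow> odd (g k 1)"
      using n by (intro odd_g_iff) simp
    then show ?thesis
      unfolding b_def using n by (cases "even k") simp_all
  qed
  moreover have "coprime ((n + 1) ^ k) (n ^ k)" "odd ((n + 1) ^ k)" "even (n ^ k)"
    using n k by simp_all
  ultimately show ?thesis
    using Gamma_odd_even by (simp add: Gamma_commute[of "n ^ k"])
qed

lemma Gamma_consecutive_powers:
  assumes "0 < k" "Mcond k M" "M \<le> n"
  shows "Gamma (n ^ k) ((n + 1) ^ k) =
    (if odd n \<longleftrightarrow> (odd k \<longleftrightarrow> odd (g k 1)) then 1 else 2)"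
  using Gamma_consecutive_powers_odd[OF assms] Gamma_consecutive_powers_even[OF assms]
  by (cases "odd n") auto

theorem theorem1p5:
  fixes k :: nat
  assumes "0 < k"
  shows "(\<exists>M. Mcond k M) \<and>
         (\<exists>N::nat. 1 \<le> N \<and> N \<le> Mk k + 1 \<and>
            (\<forall>n\<ge>N. {Gamma (n ^ k) ((n + 1) ^ k), Gamma ((n + 1) ^ k) ((n + 2) ^ k)} = {1, 2}))"
proof -
  have "\<exists>M. Mcond k M"
    using Mcond_exists[OF assms] by blast
  then have M: "Mcond k (Mk k)"
    unfolding Mk_def by (rule LeastI_ex)
  have "{Gamma (n ^ k) ((n + 1) ^ k), Gamma ((n + 1) ^ k) ((n + 2) ^ k)} = {1, 2}"
    if "Mk k \<le> n" for n
    using Gamma_consecutive_powers[OF assms M that]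
      Gamma_consecutive_powers[OF assms M, of "n + 1"] that
    by (auto simp: add.assoc)
  moreover have "1 \<le> Mk k"
    using M by (simp add: Mcond_def)
  ultimately show ?thesis
    using M by (intro conjI exI[of _ "Mk k"]) auto
qed

end
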